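(* Let $I=(x_-,x_+)\subseteq\mathbb{R}$ be an open interval, let $U\subseteq(0,\infty)\times\mathbb{R}$ be an open convex set, and let $\phi:U\to\mathbb{R}$ be a $C^2$ convex function satisfying $\phi(u,v)=u\,\frac{\partial\phi}{\partial u}(u,v)+v\,\frac{\partial\phi}{\partial v}(u,v)$ on $U$. Let $p,q$ be $C^2$ probability densities on $I$ with $(p(x),p'(x)),(q(x),q'(x))\in U$ for all $x\in I$. Define $$B_\phi(x)=\phi(p,p')-\phi(q,q')-\frac{\partial\phi}{\partial u}(q,q')\,(p-q)-\frac{\partial\phi}{\partial v}(q,q')\,(p'-q'),$$ all functions evaluated at $x$, and $D(p,q)=\int_I B_\phi(x)\,dx$, and let $$S(q,q',q'')=-\frac{\partial\phi}{\partial u}(q,q')+\frac{d}{dx}\Big[\frac{\partial\phi}{\partial v}(q,q')\Big].$$ Assume $\int_I|\phi(p,p')|$, $\int_I|p\,\partial_u\phi(q,q')|$, $\int_I|p'\,\partial_v\phi(q,q')|$ and $\int_I |p\,S(q,q',q'')|$ are finite, and that $p(x)\,\frac{\partial\phi}{\partial v}(q(x),q'(x))\to 0$ as $x\to x_\pm$. Then $$D(p,q)=\int_I\phi(p,p')\,dx+\int_I p\,S(q,q',q'')\,dx,$$ and $D(p,q)\ge 0$. Consequently, if the same hypotheses also hold with $q$ replaced by $p$, then $\int_I p\,S(q,q',q'')\,dx\ \ge\ \int_I p\,S(p,p',p'')\,dx$.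
   Context: $\frac{d}{dx}$ denotes differentiation along the function $x\mapsto(q(x),q'(x))$. *)

theory Defs
  imports "HOL-Analysis.Analysis"
begin

definition ointerval :: "ereal \<Rightarrow> ereal \<Rightarrow> real set" where
  "ointerval a b = {x. a < ereal x \<and> ereal x < b}"

definition left_end :: "ereal \<Rightarrow> real filter" where
  "left_end a = (if a = -\<infinity> then at_bot else at_right (real_of_ereal a))"

definition right_end :: "ereal \<Rightarrow> real filter" where
  "right_end b = (if b = \<infinity> then at_top else at_left (real_of_ereal b))"

definition C2_on :: "(real \<times> real) set \<Rightarrow> (real \<times> real \<Rightarrow> real) \<Rightarrow> bool" where
  "C2_on U f \<longleftrightarrow> (\<exists>f1 f2.
      (\<forall>z\<in>U. (f has_derivative blinfun_apply (f1 z)) (at z)) \<and>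
      (\<forall>z\<in>U. (f1 has_derivative blinfun_apply (f2 z)) (at z)) \<and>
      continuous_on U f2)"

definition phi_u :: "(real \<times> real \<Rightarrow> real) \<Rightarrow> real \<times> real \<Rightarrow> real" where
  "phi_u \<phi> z = frechet_derivative \<phi> (at z) (1, 0)"

definition phi_v :: "(real \<times> real \<Rightarrow> real) \<Rightarrow> real \<times> real \<Rightarrow> real" where
  "phi_v \<phi> z = frechet_derivative \<phi> (at z) (0, 1)"

definition C2_fun_on :: "real set \<Rightarrow> (real \<Rightarrow> real) \<Rightarrow> (real \<Rightarrow> real) \<Rightarrow> (real \<Rightarrow> real) \<Rightarrow> bool" where
  "C2_fun_on I f f1 f2 \<longleftrightarrow>
     (\<forall>x\<in>I. (f has_real_derivative f1 x) (at x)) \<and>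
     (\<forall>x\<in>I. (f1 has_real_derivative f2 x) (at x)) \<and> continuous_on I f2"

definition C2_density :: "real set \<Rightarrow> (real \<Rightarrow> real) \<Rightarrow> (real \<Rightarrow> real) \<Rightarrow> (real \<Rightarrow> real) \<Rightarrow> bool" where
  "C2_density I f f1 f2 \<longleftrightarrow> C2_fun_on I f f1 f2 \<and> (\<forall>x\<in>I. f x \<ge> 0) \<and>
     f integrable_on I \<and> integral I f = 1"

definition Bphi :: "(real \<times> real \<Rightarrow> real) \<Rightarrow> (real \<Rightarrow> real) \<Rightarrow> (real \<Rightarrow> real) \<Rightarrow>
    (real \<Rightarrow> real) \<Rightarrow> (real \<Rightarrow> real) \<Rightarrow> real \<Rightarrow> real" where
  "Bphi \<phi> p p1 q q1 x =
     \<phi> (p x, p1 x) - \<phi> (q x, q1 x)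
     - phi_u \<phi> (q x, q1 x) * (p x - q x) - phi_v \<phi> (q x, q1 x) * (p1 x - q1 x)"

definition Dphi :: "(real \<times> real \<Rightarrow> real) \<Rightarrow> real set \<Rightarrow> (real \<Rightarrow> real) \<Rightarrow> (real \<Rightarrow> real) \<Rightarrow>
    (real \<Rightarrow> real) \<Rightarrow> (real \<Rightarrow> real) \<Rightarrow> real" where
  "Dphi \<phi> I p p1 q q1 = integral I (Bphi \<phi> p p1 q q1)"

definition Sphi :: "(real \<times> real \<Rightarrow> real) \<Rightarrow> (real \<Rightarrow> real) \<Rightarrow> (real \<Rightarrow> real) \<Rightarrow> real \<Rightarrow> real" where
  "Sphi \<phi> q q1 x = - phi_u \<phi> (q x, q1 x) + deriv (\<lambda>y. phi_v \<phi> (q y, q1 y)) x"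

definition pair_hyps :: "(real \<times> real \<Rightarrow> real) \<Rightarrow> ereal \<Rightarrow> ereal \<Rightarrow> (real \<Rightarrow> real) \<Rightarrow> (real \<Rightarrow> real) \<Rightarrow>
    (real \<Rightarrow> real) \<Rightarrow> (real \<Rightarrow> real) \<Rightarrow> bool" where
  "pair_hyps \<phi> a b p p1 q q1 \<longleftrightarrow>
     (\<lambda>x. \<phi> (p x, p1 x)) absolutely_integrable_on ointerval a b \<and>
     (\<lambda>x. p x * phi_u \<phi> (q x, q1 x)) absolutely_integrable_on ointerval a b \<and>
     (\<lambda>x. p1 x * phi_v \<phi> (q x, q1 x)) absolutely_integrable_on ointerval a b \<and>
     (\<lambda>x. p x * Sphi \<phi> q q1 x) absolutely_integrable_on ointerval a b \<and>
     ((\<lambda>x. p x * phi_v \<phi> (q x, q1 x)) \<longlongrightarrow> 0) (left_end a) \<and>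
     ((\<lambda>x. p x * phi_v \<phi> (q x, q1 x)) \<longlongrightarrow> 0) (right_end b)"

end

theory Submission imports Defs begin

text \<open>
  Convexity of \<open>\<phi>\<close> says that \<open>\<phi>\<close> lies above its tangent plane at \<open>(q, q')\<close>, so the
  Bregman integrand \<open>B\<^sub>\<phi>\<close> is pointwise nonnegative and \<open>D(p,q) \<ge> 0\<close>.  By Euler's identity
  \<open>\<phi>(u,v) = u \<partial>\<^sub>u\<phi> + v \<partial>\<^sub>v\<phi>\<close> the terms of \<open>B\<^sub>\<phi>\<close> involving \<open>\<phi>(q,q')\<close> cancel, leaving
  \<open>\<phi>(p,p') - p \<partial>\<^sub>u\<phi>(q,q') - p' \<partial>\<^sub>v\<phi>(q,q')\<close>.  Integrating \<open>(p \<partial>\<^sub>v\<phi>(q,q'))'\<close> over \<open>I\<close>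
  gives zero because of the boundary conditions, which turns the last two terms into
  \<open>\<integral> p S(q,q',q'')\<close>.  Finally \<open>D(p,p) = 0\<close>, so comparing \<open>D(p,q) \<ge> 0\<close> with \<open>D(p,p) = 0\<close>
  yields the inequality between the two score integrals.
\<close>

lemma ointerval_eq_einterval: "ointerval a b = einterval a b"
  by (simp add: ointerval_def einterval_def)

lemma filterlim_left_end_sequentially:
  fixes l :: "nat \<Rightarrow> real" and a :: ereal
  assumes "\<And>i. a < ereal (l i)" and "(\<lambda>i. ereal (l i)) \<longlonglongrightarrow> a"
  shows "filterlim l (left_end a) sequentially"
proof (cases a)
  case (real r)
  have "l \<longlonglongrightarrow> r" using assms(2) real by (simp add: lim_ereal)
  moreover have "\<forall>\<^sub>F i in sequentially. l i > r" using assms(1) real by simp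
  ultimately show ?thesis using real by (simp add: left_end_def tendsto_imp_filterlim_at_right)
next
  case PInf
  then show ?thesis using assms(1) by simp
next
  case MInf
  have "filterlim l at_bot sequentially"
    unfolding filterlim_at_bot
  proof
    fix Z :: real
    have "\<forall>\<^sub>F i in sequentially. ereal (l i) < ereal Z"
      using assms(2) MInf by (intro order_tendstoD(2)) auto
    then show "\<forall>\<^sub>F i in sequentially. l i \<le> Z" by (auto elim: eventually_mono)
  qed
  then show ?thesis using MInf by (simp add: left_end_def)
qed

lemma filterlim_right_end_sequentially:
  fixes u :: "nat \<Rightarrow> real" and b :: ereal
  assumes "\<And>i. ereal (u i) < b" and "(\<lambda>i. ereal (u i)) \<longlonglongrightarrow> b"
  shows "filterlim u (right_end b) sequentially"
proof (cases b)
  case (real r)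
  have "u \<longlonglongrightarrow> r" using assms(2) real by (simp add: lim_ereal)
  moreover have "\<forall>\<^sub>F i in sequentially. u i < r" using assms(1) real by simp
  ultimately show ?thesis using real by (simp add: right_end_def tendsto_imp_filterlim_at_left)
next
  case MInf
  then show ?thesis using assms(1) by simp
next
  case PInf
  have "filterlim u at_top sequentially"
    unfolding filterlim_at_top
  proof
    fix Z :: real
    have "\<forall>\<^sub>F i in sequentially. ereal Z < ereal (u i)"
      using assms(2) PInf by (intro order_tendstoD(1)) auto
    then show "\<forall>\<^sub>F i in sequentially. Z \<le> u i" by (auto elim: eventually_mono)
  qed
  then show ?thesis using PInf by (simp add: right_end_def)
qed

lemma integral_incseq_tendsto_integral_Union:
  fixes f :: "'a::euclidean_space \<Rightarrow> 'b::euclidean_space"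
  assumes K: "incseq K" and meas: "\<And>k. K k \<in> sets lebesgue"
    and f: "f absolutely_integrable_on (\<Union>k. K k)"
  shows "(\<lambda>k. integral (K k) f) \<longlonglongrightarrow> integral (\<Union>k. K k) f"
proof -
  define S where "S = (\<Union>k. K k)"
  define f\<^sub>K where "f\<^sub>K k x = (if x \<in> K k then f x else 0)" for k x
  have restrict: "integral S (f\<^sub>K k) = integral (K k) f" and f\<^sub>K_int: "f\<^sub>K k integrable_on S" for k
  proof -
    have "K k \<inter> S = K k" by (auto simp: S_def)
    moreover have "f integrable_on K k"
      using set_integrable_subset[OF f meas] by (auto simp: absolutely_integrable_on_def)
    ultimately show "integral S (f\<^sub>K k) = integral (K k) f" "f\<^sub>K k integrable_on S"
      unfolding f\<^sub>K_def by (simp_all add: integral_restrict_Int integrable_restrict_Int)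
  qed
  have pointwise: "(\<lambda>k. f\<^sub>K k x) \<longlonglongrightarrow> f x" if x: "x \<in> S" for x
  proof -
    obtain i where "x \<in> K i" using x by (auto simp: S_def)
    then have "\<forall>\<^sub>F k in sequentially. f\<^sub>K k x = f x"
      using K by (auto simp: f\<^sub>K_def eventually_sequentially incseq_def)
    then show ?thesis by (rule tendsto_eventually)
  qed
  have "(\<lambda>x. norm (f x)) integrable_on S"
    using f by (simp add: absolutely_integrable_on_def S_def)
  moreover have "norm (f\<^sub>K k x) \<le> norm (f x)" for k x
    by (simp add: f\<^sub>K_def)
  ultimately have "(\<lambda>k. integral S (f\<^sub>K k)) \<longlonglongrightarrow> integral S f"
    using dominated_convergence(2)[OF f\<^sub>K_int _ _ pointwise] by blast
  then show ?thesis unfolding restrict by (simp add: S_def)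
qed

lemma integral_ointerval_FTC:
  fixes g g' :: "real \<Rightarrow> real" and a b :: ereal
  assumes "a < b"
    and der: "\<And>x. x \<in> ointerval a b \<Longrightarrow> (g has_real_derivative g' x) (at x)"
    and g': "g' absolutely_integrable_on ointerval a b"
    and A: "(g \<longlongrightarrow> A) (left_end a)" and B: "(g \<longlongrightarrow> B) (right_end b)"
  shows "integral (ointerval a b) g' = B - A"
proof -
  obtain u l where approx:
    "einterval a b = (\<Union>i. {l i .. u i})"
    "incseq u" "decseq l" "\<And>i. l i < u i" "\<And>i. a < l i" "\<And>i. u i < b"
    "l \<longlonglongrightarrow> a" "u \<longlonglongrightarrow> b"
    by (rule einterval_Icc_approximation[OF \<open>a < b\<close>]) blast
  have I: "ointerval a b = (\<Union>i. {l i..u i})"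
    using approx(1) by (simp only: ointerval_eq_einterval)
  have inc: "incseq (\<lambda>i. {l i..u i})"
    using approx(2,3) unfolding incseq_def decseq_def by (meson atLeastatMost_subset_iff)
  have "(\<lambda>k. integral {l k..u k} g') \<longlonglongrightarrow> integral (ointerval a b) g'"
    unfolding I by (rule integral_incseq_tendsto_integral_Union[OF inc _ g'[unfolded I]]) simp
  moreover have "integral {l k..u k} g' = g (u k) - g (l k)" for k
  proof (rule integral_unique, rule fundamental_theorem_of_calculus)
    show "l k \<le> u k" using approx(4)[of k] by simp
    fix x assume "x \<in> {l k..u k}"
    then have "x \<in> ointerval a b"
      unfolding I by blast
    then show "(g has_vector_derivative g' x) (at x within {l k..u k})"
      using der by (metis has_real_derivative_iff_has_vector_derivative
          has_vector_derivative_at_within)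
  qed
  ultimately have "(\<lambda>k. g (u k) - g (l k)) \<longlonglongrightarrow> integral (ointerval a b) g'"
    by simp
  moreover have "(\<lambda>k. g (u k) - g (l k)) \<longlonglongrightarrow> B - A"
    using filterlim_compose[OF B filterlim_right_end_sequentially[OF approx(6,8)]]
      filterlim_compose[OF A filterlim_left_end_sequentially[OF approx(5,7)]]
    by (rule tendsto_diff)
  ultimately show ?thesis by (rule LIMSEQ_unique)
qed

lemma convex_on_above_tangent:
  fixes \<phi> :: "'a::real_normed_vector \<Rightarrow> real"
  assumes U: "convex U" "open U" and cv: "convex_on U \<phi>" and PQ: "P \<in> U" "Q \<in> U"
    and D: "(\<phi> has_derivative D) (at Q)"
  shows "D (P - Q) \<le> \<phi> P - \<phi> Q"
proof -
  define d where "d = P - Q"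
  define \<gamma> where "\<gamma> t = Q + t *\<^sub>R d" for t :: real
  define A where "A = \<gamma> -` U"
  have \<gamma>_affine: "\<gamma> ((1 - t) * x + t * y) = (1 - t) *\<^sub>R \<gamma> x + t *\<^sub>R \<gamma> y" for t x y
    by (simp add: \<gamma>_def algebra_simps)
  have "convex A"
    unfolding convex_alt A_def using U(1) by (auto simp: convex_alt \<gamma>_affine)
  moreover have "convex_on A (\<phi> \<circ> \<gamma>)"
    using \<open>convex A\<close> convex_onD[OF cv] by (intro convex_onI) (auto simp: A_def \<gamma>_affine)
  moreover have "0 \<in> interior A"
  proof -
    have "open A" unfolding A_def \<gamma>_def
      by (rule open_vimage[OF U(2)]) (intro continuous_intros)
    then show ?thesis using PQ(2) by (simp add: A_def \<gamma>_def interior_open)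
  qed
  moreover have "1 \<in> A" using PQ(1) by (simp add: A_def \<gamma>_def d_def)
  moreover have "((\<phi> \<circ> \<gamma>) has_field_derivative D d) (at 0 within A)"
  proof -
    have "(\<gamma> has_derivative (\<lambda>t. t *\<^sub>R d)) (at 0)"
      unfolding \<gamma>_def by (auto intro!: derivative_eq_intros)
    moreover have "(\<phi> has_derivative D) (at (\<gamma> 0))" using D by (simp add: \<gamma>_def)
    ultimately have "(\<phi> \<circ> \<gamma> has_derivative (\<lambda>t. D (t *\<^sub>R d))) (at 0)"
      using diff_chain_at by (auto simp: comp_def)
    moreover have "(\<lambda>t. D (t *\<^sub>R d)) = (*) (D d)"
      using linear_scale[OF has_derivative_linear[OF D]] by (auto simp: mult.commute)
    ultimately show ?thesis
      by (simp add: has_field_derivative_def has_derivative_at_withinI)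
  qed
  ultimately have "(\<phi> \<circ> \<gamma>) 1 - (\<phi> \<circ> \<gamma>) 0 \<ge> D d * (1 - 0)"
    by (intro convex_on_imp_above_tangent convex_connected) (simp_all add: comp_def)
  then show ?thesis by (simp add: \<gamma>_def d_def)
qed

lemma frechet_derivative_Pair_eq_partials:
  fixes \<phi> :: "real \<times> real \<Rightarrow> real"
  assumes "\<phi> differentiable (at z)"
  shows "frechet_derivative \<phi> (at z) (w\<^sub>1, w\<^sub>2) = w\<^sub>1 * phi_u \<phi> z + w\<^sub>2 * phi_v \<phi> z"
proof -
  define D where "D = frechet_derivative \<phi> (at z)"
  have lin: "linear D"
    using frechet_derivative_works[THEN iffD1, OF assms] unfolding D_def by (rule has_derivative_linear)
  have "D (w\<^sub>1, w\<^sub>2) = D (w\<^sub>1 *\<^sub>R (1, 0) + w\<^sub>2 *\<^sub>R (0, 1))" by simp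
  also have "\<dots> = w\<^sub>1 * D (1, 0) + w\<^sub>2 * D (0, 1)"
    by (simp only: linear_add[OF lin] linear_scale[OF lin] real_scaleR_def)
  finally show ?thesis by (simp add: D_def phi_u_def phi_v_def)
qed

lemma Bphi_nonneg:
  assumes "convex U" "open U" "convex_on U \<phi>"
    and "(p x, p1 x) \<in> U" "(q x, q1 x) \<in> U" and diff: "\<phi> differentiable (at (q x, q1 x))"
  shows "0 \<le> Bphi \<phi> p p1 q q1 x"
proof -
  define D where "D = frechet_derivative \<phi> (at (q x, q1 x))"
  have "(\<phi> has_derivative D) (at (q x, q1 x))"
    using diff by (simp add: D_def frechet_derivative_works)
  from convex_on_above_tangent[OF assms(1-5) this]
  have "D (p x - q x, p1 x - q1 x) \<le> \<phi> (p x, p1 x) - \<phi> (q x, q1 x)"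
    by simp
  moreover have "D (p x - q x, p1 x - q1 x)
      = (p x - q x) * phi_u \<phi> (q x, q1 x) + (p1 x - q1 x) * phi_v \<phi> (q x, q1 x)"
    unfolding D_def by (rule frechet_derivative_Pair_eq_partials[OF diff])
  ultimately show ?thesis
    unfolding Bphi_def by (simp add: algebra_simps)
qed

lemma C2_on_differentiable: "C2_on U \<phi> \<Longrightarrow> z \<in> U \<Longrightarrow> \<phi> differentiable (at z)"
  unfolding C2_on_def differentiable_def by blast

lemma C2_on_phi_v_differentiable:
  assumes "C2_on U \<phi>" "open U" "z \<in> U"
  shows "phi_v \<phi> differentiable (at z)"
proof -
  obtain f\<^sub>1 f\<^sub>2
    where f\<^sub>1: "\<And>y. y \<in> U \<Longrightarrow> (\<phi> has_derivative blinfun_apply (f\<^sub>1 y)) (at y)"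
      and f\<^sub>2: "\<And>y. y \<in> U \<Longrightarrow> (f\<^sub>1 has_derivative blinfun_apply (f\<^sub>2 y)) (at y)"
    using assms(1) unfolding C2_on_def by blast
  have "((\<lambda>y. blinfun_apply (f\<^sub>1 y) (0, 1)) has_derivative (\<lambda>w. blinfun_apply (f\<^sub>2 z w) (0, 1))) (at z)"
    by (rule bounded_linear.has_derivative[OF blinfun.bounded_linear_left f\<^sub>2[OF assms(3)]])
  moreover have "blinfun_apply (f\<^sub>1 y) (0, 1) = phi_v \<phi> y" if "y \<in> U" for y
    using frechet_derivative_at[OF f\<^sub>1[OF that]] by (simp add: phi_v_def)
  ultimately have "(phi_v \<phi> has_derivative (\<lambda>w. blinfun_apply (f\<^sub>2 z w) (0, 1))) (at z)"
    by (rule has_derivative_transform_within_open[OF _ assms(2,3)])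
  then show ?thesis by (auto simp: differentiable_def)
qed

lemma C2_on_phi_v_curve_differentiable:
  fixes f f' :: "real \<Rightarrow> real"
  assumes "C2_on U \<phi>" "open U"
    and "(f has_real_derivative f' x) (at x)" "(f' has_real_derivative f'') (at x)"
    and "(f x, f' x) \<in> U"
  shows "(\<lambda>y. phi_v \<phi> (f y, f' y)) differentiable (at x)"
proof -
  have "((\<lambda>y. (f y, f' y)) has_derivative (\<lambda>t. (f' x * t, f'' * t))) (at x)"
    using assms(3,4) by (intro has_derivative_Pair) (auto dest: has_field_derivative_imp_has_derivative)
  then have "(\<lambda>y. (f y, f' y)) differentiable (at x)"
    by (auto simp: differentiable_def)
  from differentiable_chain_at[OF this C2_on_phi_v_differentiable[OF assms(1,2,5)]]
  show ?thesis by (simp add: comp_def)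
qed

lemma integral_p_Sphi_by_parts:
  fixes \<phi> :: "real \<times> real \<Rightarrow> real"
  assumes "a < b" "open U" "C2_on U \<phi>"
    and p': "\<And>x. x \<in> ointerval a b \<Longrightarrow> (p has_real_derivative p1 x) (at x)"
    and q': "\<And>x. x \<in> ointerval a b \<Longrightarrow> (q has_real_derivative q1 x) (at x)"
    and q'': "\<And>x. x \<in> ointerval a b \<Longrightarrow> (q1 has_real_derivative q2 x) (at x)"
    and qU: "\<And>x. x \<in> ointerval a b \<Longrightarrow> (q x, q1 x) \<in> U"
    and int_u: "(\<lambda>x. p x * phi_u \<phi> (q x, q1 x)) absolutely_integrable_on ointerval a b"
    and int_v: "(\<lambda>x. p1 x * phi_v \<phi> (q x, q1 x)) absolutely_integrable_on ointerval a b"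
    and int_S: "(\<lambda>x. p x * Sphi \<phi> q q1 x) absolutely_integrable_on ointerval a b"
    and lim_a: "((\<lambda>x. p x * phi_v \<phi> (q x, q1 x)) \<longlongrightarrow> 0) (left_end a)"
    and lim_b: "((\<lambda>x. p x * phi_v \<phi> (q x, q1 x)) \<longlongrightarrow> 0) (right_end b)"
  shows "integral (ointerval a b) (\<lambda>x. p x * Sphi \<phi> q q1 x)
       = - integral (ointerval a b) (\<lambda>x. p x * phi_u \<phi> (q x, q1 x))
         - integral (ointerval a b) (\<lambda>x. p1 x * phi_v \<phi> (q x, q1 x))"
proof -
  define I where "I = ointerval a b"
  define V where "V = (\<lambda>y. phi_v \<phi> (q y, q1 y))"
  define G where "G x = p x * phi_u \<phi> (q x, q1 x) + p1 x * V x + p x * Sphi \<phi> q q1 x" for x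
  have "((\<lambda>y. p y * V y) has_real_derivative G x) (at x)" if "x \<in> I" for x
  proof -
    have x: "x \<in> ointerval a b" using that by (simp add: I_def)
    have "(V has_real_derivative deriv V x) (at x)"
      using C2_on_phi_v_curve_differentiable[where f = q and f' = q1 and x = x,
          OF assms(3,2) q'[OF x] q''[OF x] qU[OF x]]
      by (simp add: V_def DERIV_deriv_iff_real_differentiable)
    then have "((\<lambda>y. p y * V y) has_real_derivative p1 x * V x + p x * deriv V x) (at x)"
      using p'[OF x] by (auto intro!: derivative_eq_intros)
    moreover have "p1 x * V x + p x * deriv V x = G x"
      unfolding G_def Sphi_def V_def by (simp add: algebra_simps)
    ultimately show ?thesis by simp
  qed
  moreover have "G absolutely_integrable_on I"
    unfolding G_def I_def V_def using int_u int_v int_S by (intro set_integral_add(1)) auto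
  ultimately have "integral I G = 0 - 0"
    using integral_ointerval_FTC[OF \<open>a < b\<close>] lim_a lim_b unfolding I_def V_def by blast
  moreover have "integral I G = integral I (\<lambda>x. p x * phi_u \<phi> (q x, q1 x))
      + integral I (\<lambda>x. p1 x * phi_v \<phi> (q x, q1 x)) + integral I (\<lambda>x. p x * Sphi \<phi> q q1 x)"
    using int_u int_v int_S unfolding G_def V_def I_def absolutely_integrable_on_def
    by (simp add: integral_add integrable_add)
  ultimately show ?thesis unfolding I_def by linarith
qed

lemma Bphi_absolutely_integrable_Dphi_eq:
  fixes \<phi> :: "real \<times> real \<Rightarrow> real"
  assumes "a < b" "open U" "C2_on U \<phi>"
    and Euler: "\<forall>u v. (u, v) \<in> U \<longrightarrow> \<phi> (u, v) = u * phi_u \<phi> (u, v) + v * phi_v \<phi> (u, v)"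
    and pC: "C2_fun_on (ointerval a b) p p1 p2" and qC: "C2_fun_on (ointerval a b) q q1 q2"
    and qU: "\<forall>x\<in>ointerval a b. (q x, q1 x) \<in> U"
    and hyps: "pair_hyps \<phi> a b p p1 q q1"
  shows "Bphi \<phi> p p1 q q1 absolutely_integrable_on ointerval a b"
    and "Dphi \<phi> (ointerval a b) p p1 q q1
           = integral (ointerval a b) (\<lambda>x. \<phi> (p x, p1 x))
             + integral (ointerval a b) (\<lambda>x. p x * Sphi \<phi> q q1 x)"
proof -
  define I where "I = ointerval a b"
  define A where "A = (\<lambda>x. \<phi> (p x, p1 x))"
  define B\<^sub>u where "B\<^sub>u = (\<lambda>x. p x * phi_u \<phi> (q x, q1 x))"
  define B\<^sub>v where "B\<^sub>v = (\<lambda>x. p1 x * phi_v \<phi> (q x, q1 x))"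
  have int_A: "A absolutely_integrable_on I" and int_u: "B\<^sub>u absolutely_integrable_on I"
    and int_v: "B\<^sub>v absolutely_integrable_on I"
    using hyps unfolding pair_hyps_def A_def B\<^sub>u_def B\<^sub>v_def I_def by auto
  have Bphi_eq: "Bphi \<phi> p p1 q q1 x = A x - B\<^sub>u x - B\<^sub>v x" if "x \<in> I" for x
    using Euler qU that unfolding Bphi_def A_def B\<^sub>u_def B\<^sub>v_def I_def
    by (auto simp: algebra_simps)
  have "(\<lambda>x. A x - B\<^sub>u x - B\<^sub>v x) absolutely_integrable_on I"
    using int_A int_u int_v by (intro set_integral_diff(1)) auto
  then show "Bphi \<phi> p p1 q q1 absolutely_integrable_on ointerval a b"
    unfolding I_def[symmetric]
    by (rule absolutely_integrable_spike[of _ _ "{}"]) (auto simp: Bphi_eq)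
  have "Dphi \<phi> I p p1 q q1 = integral I (\<lambda>x. A x - B\<^sub>u x - B\<^sub>v x)"
    unfolding Dphi_def by (rule integral_cong) (simp add: Bphi_eq)
  also have "\<dots> = integral I A - integral I B\<^sub>u - integral I B\<^sub>v"
    using int_A int_u int_v unfolding absolutely_integrable_on_def
    by (simp add: integral_diff integrable_diff)
  also have "\<dots> = integral I A + integral I (\<lambda>x. p x * Sphi \<phi> q q1 x)"
    using integral_p_Sphi_by_parts[OF assms(1-3), of p p1 q q1 q2] pC qC qU hyps
    unfolding I_def B\<^sub>u_def B\<^sub>v_def C2_fun_on_def pair_hyps_def by simp
  finally show "Dphi \<phi> (ointerval a b) p p1 q q1
      = integral (ointerval a b) (\<lambda>x. \<phi> (p x, p1 x))
        + integral (ointerval a b) (\<lambda>x. p x * Sphi \<phi> q q1 x)"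
    by (simp add: I_def A_def)
qed

lemma Dphi_nonneg:
  assumes "convex U" "open U" "convex_on U \<phi>"
    and "\<forall>x\<in>I. (p x, p1 x) \<in> U \<and> (q x, q1 x) \<in> U"
    and "\<forall>x\<in>I. \<phi> differentiable (at (q x, q1 x))"
    and "Bphi \<phi> p p1 q q1 integrable_on I"
  shows "0 \<le> Dphi \<phi> I p p1 q q1"
  unfolding Dphi_def using assms by (intro integral_nonneg Bphi_nonneg[OF assms(1-3)]) auto

theorem mainTheorem6:
  fixes a b :: ereal
    and U :: "(real \<times> real) set"
    and \<phi> :: "real \<times> real \<Rightarrow> real"
    and p p1 p2 q q1 q2 :: "real \<Rightarrow> real"
  assumes "a < b"
    and "open U" and "convex U" and "U \<subseteq> {z. fst z > 0}"
    and "C2_on U \<phi>" and "convex_on U \<phi>"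
    and "\<forall>u v. (u, v) \<in> U \<longrightarrow> \<phi> (u, v) = u * phi_u \<phi> (u, v) + v * phi_v \<phi> (u, v)"
    and "C2_density (ointerval a b) p p1 p2"
    and "C2_density (ointerval a b) q q1 q2"
    and "\<forall>x\<in>ointerval a b. (p x, p1 x) \<in> U \<and> (q x, q1 x) \<in> U"
    and "pair_hyps \<phi> a b p p1 q q1"
  shows "Bphi \<phi> p p1 q q1 absolutely_integrable_on ointerval a b
       \<and> Dphi \<phi> (ointerval a b) p p1 q q1
           = integral (ointerval a b) (\<lambda>x. \<phi> (p x, p1 x))
             + integral (ointerval a b) (\<lambda>x. p x * Sphi \<phi> q q1 x)
       \<and> Dphi \<phi> (ointerval a b) p p1 q q1 \<ge> 0
       \<and> (pair_hyps \<phi> a b p p1 p p1 \<longrightarrow>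
            integral (ointerval a b) (\<lambda>x. p x * Sphi \<phi> q q1 x)
              \<ge> integral (ointerval a b) (\<lambda>x. p x * Sphi \<phi> p p1 x))"
proof -
  have pC: "C2_fun_on (ointerval a b) p p1 p2" and qC: "C2_fun_on (ointerval a b) q q1 q2"
    using assms(8,9) by (auto simp: C2_density_def)
  have pU: "\<forall>x\<in>ointerval a b. (p x, p1 x) \<in> U" and qU: "\<forall>x\<in>ointerval a b. (q x, q1 x) \<in> U"
    using assms(10) by auto
  note pq = Bphi_absolutely_integrable_Dphi_eq[OF assms(1,2,5,7) pC qC qU assms(11)]
  have D_nonneg: "Dphi \<phi> (ointerval a b) p p1 q q1 \<ge> 0"
    using pq(1) assms(10) C2_on_differentiable[OF assms(5)]
    by (intro Dphi_nonneg[OF assms(3,2,6)]) (auto simp: absolutely_integrable_on_def)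
  have "integral (ointerval a b) (\<lambda>x. p x * Sphi \<phi> q q1 x)
          \<ge> integral (ointerval a b) (\<lambda>x. p x * Sphi \<phi> p p1 x)"
    if "pair_hyps \<phi> a b p p1 p p1"
  proof -
    have "Dphi \<phi> (ointerval a b) p p1 p p1 = 0"
      unfolding Dphi_def Bphi_def by simp
    then show ?thesis
      using Bphi_absolutely_integrable_Dphi_eq(2)[OF assms(1,2,5,7) pC pC pU that] pq(2) D_nonneg
      by linarith
  qed
  then show ?thesis using pq D_nonneg by blast
qed

end
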